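(* Let $q$ be a real number with $q\notin\{0,1,-1\}$ and let $a,b\in\mathbb{C}$. Then, as identities of formal power series in $z$ (hence for $z$ in a neighborhood of $0$): (1) $\mathrm{E}_q(a,b;z)\,\mathrm{E}_q(b,a;-z)=1$; (2) $\mathrm{E}_{q^{-1}}(a,b;z)=\mathrm{E}_q(b,a;z)$; (3) $\mathrm{E}_q(1,-q;z)=\frac{1}{1-(1-q)z}$; (4) $\mathrm{E}_q(-q,1;z)=1+(1-q)z$.
   Context: $[n]_q=\frac{1-q^n}{1-q}$, $[0]_q!=1$, $[n]_q!=\prod_{k=1}^n[k]_q$. $(a\oplus b)^0_{1,q}=1$, $(a\oplus b)^n_{1,q}=\prod_{i=0}^{n-1}(a+bq^i)$. $\mathrm{E}_q(a,b;z)=\sum_{n=0}^\infty(a\oplus b)^n_{1,q}\frac{z^n}{[n]_q!}$. *)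

theory Defs
  imports "HOL-Computational_Algebra.Formal_Power_Series"
begin

definition qint :: "real \<Rightarrow> nat \<Rightarrow> real" where
  "qint q n = (1 - q ^ n) / (1 - q)"

definition qfact :: "real \<Rightarrow> nat \<Rightarrow> real" where
  "qfact q n = (\<Prod>k = 1..n. qint q k)"

definition qpow :: "complex \<Rightarrow> complex \<Rightarrow> real \<Rightarrow> nat \<Rightarrow> complex" where
  "qpow a b q n = (\<Prod>i<n. a + b * complex_of_real q ^ i)"

definition Eq :: "real \<Rightarrow> complex \<Rightarrow> complex \<Rightarrow> complex fps" where
  "Eq q a b = Abs_fps (\<lambda>n. qpow a b q n / complex_of_real (qfact q n))"

end

theory Submission
  imports Defs
begin

(* Write D f for the dilation f(z) |-> f(q z). The coefficient recurrence of E_q(a,b) is the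
   q-difference equation f - D f = (1 - q) z (a f + b D f), and substituting z |-> -z turns the
   equation of E_q(b,a) into the same one with (1 - q) negated. For the product h of the two
   series this gives (1 - (1 - q) a z) (h - D h) = 0, so h = D h; as q^n <> 1 for n > 0, only
   the constant term 1 of h survives. The remaining identities hold because a series with
   constant term 1 is determined by the recurrence. *)

unbundle fps_syntax

definition fps_dilate :: "'a::comm_ring_1 \<Rightarrow> 'a fps \<Rightarrow> 'a fps" where
  "fps_dilate c f = f oo (fps_const c * fps_X)"

definition q_difference_eq :: "'a::comm_ring_1 \<Rightarrow> 'a \<Rightarrow> 'a \<Rightarrow> 'a \<Rightarrow> 'a fps \<Rightarrow> bool" where
  "q_difference_eq c k a b f \<longleftrightarrow>
     f - fps_dilate c f = fps_const k * fps_X * (fps_const a * f + fps_const b * fps_dilate c f)"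

lemma fps_dilate_nth [simp]: "fps_dilate c f $ n = c ^ n * f $ n"
  by (simp add: fps_dilate_def)

lemma fps_dilate_mult:
  fixes f g :: "'a::idom fps"
  shows "fps_dilate c (f * g) = fps_dilate c f * fps_dilate c g"
  by (simp add: fps_dilate_def fps_compose_mult_distrib)

lemma fps_dilate_compose_uminus_X:
  fixes f :: "'a::comm_ring_1 fps"
  shows "fps_dilate c f oo - fps_X = fps_dilate c (f oo - fps_X)"
  by (simp add: fps_eq_iff fps_compose_uminus' mult.left_commute)

lemma fps_dilate_fixed_imp_const:
  fixes h :: "'a::idom fps"
  assumes "fps_dilate c h = h" and "\<And>n. n > 0 \<Longrightarrow> c ^ n \<noteq> 1"
  shows "h = fps_const (h $ 0)"
proof (rule fps_ext)
  fix n
  show "h $ n = fps_const (h $ 0) $ n"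
  proof (cases "n = 0")
    case False
    from assms(1) have "(1 - c ^ n) * h $ n = 0"
      by (metis fps_dilate_nth left_diff_distrib mult_1 right_minus_eq)
    with assms(2) False show ?thesis by simp
  qed simp
qed

lemma q_difference_eq_compose_uminus_X:
  fixes f :: "'a::idom fps"
  assumes "q_difference_eq c k a b f"
  shows "q_difference_eq c (- k) a b (f oo - fps_X)"
proof -
  have "(f oo - fps_X) - fps_dilate c (f oo - fps_X) = (f - fps_dilate c f) oo - fps_X"
    by (simp add: fps_compose_sub_distrib fps_dilate_compose_uminus_X)
  also have "\<dots> = (fps_const k * fps_X * (fps_const a * f + fps_const b * fps_dilate c f)) oo - fps_X"
    using assms by (simp add: q_difference_eq_def)
  also have "\<dots> = - (fps_const k * fps_X
      * (fps_const a * (f oo - fps_X) + fps_const b * fps_dilate c (f oo - fps_X)))"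
    by (simp add: fps_compose_mult_distrib fps_compose_add_distrib fps_dilate_compose_uminus_X)
  finally show ?thesis by (simp add: q_difference_eq_def flip: fps_const_neg)
qed

lemma q_difference_eq_mult_fixed:
  fixes f g :: "'a::idom fps"
  assumes "q_difference_eq c k a b f" and "q_difference_eq c (- k) b a g"
  shows "fps_dilate c (f * g) = f * g"
proof -
  define h where "h = f * g"
  note f = assms(1)[unfolded q_difference_eq_def] and g = assms(2)[unfolded q_difference_eq_def]
  have "h - fps_dilate c h = (f - fps_dilate c f) * g + fps_dilate c f * (g - fps_dilate c g)"
    by (simp add: h_def fps_dilate_mult algebra_simps)
  also have "\<dots> = fps_const k * fps_X * (fps_const a * f + fps_const b * fps_dilate c f) * g
      + fps_dilate c f * (fps_const (- k) * fps_X * (fps_const b * g + fps_const a * fps_dilate c g))"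
    by (simp only: f g)
  also have "\<dots> = fps_const (k * a) * fps_X * (h - fps_dilate c h)"
    by (simp add: h_def fps_dilate_mult algebra_simps flip: fps_const_neg fps_const_mult)
  finally have "(1 - fps_const (k * a) * fps_X) * (h - fps_dilate c h) = 0"
    by (simp add: algebra_simps)
  moreover have "1 - fps_const (k * a) * fps_X \<noteq> 0"
  proof
    assume "1 - fps_const (k * a) * fps_X = 0"
    then have "(1 - fps_const (k * a) * fps_X) $ 0 = 0" by (simp only: fps_zero_nth)
    then show False by simp
  qed
  ultimately show ?thesis
    by (simp add: h_def)
qed

lemma of_real_power_ne_one:
  fixes q :: real
  assumes "q \<noteq> 1" and "q \<noteq> -1" and "n > 0"
  shows "(of_real q :: 'a::real_normed_div_algebra) ^ n \<noteq> 1"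
  using power_eq_1_iff[of "of_real q :: 'a" n] assms by auto

lemma qint_nonzero:
  assumes "q \<noteq> 1" and "q \<noteq> -1" and "n > 0"
  shows "qint q n \<noteq> 0"
  using of_real_power_ne_one[OF assms, where 'a=real] assms by (simp add: qint_def)

lemma Eq_nth: "Eq q a b $ n = qpow a b q n / of_real (qfact q n)"
  by (simp add: Eq_def)

lemma Eq_nth_0 [simp]: "Eq q a b $ 0 = 1"
  by (simp add: Eq_nth qpow_def qfact_def)

lemma Eq_nth_Suc:
  "Eq q a b $ Suc n = Eq q a b $ n * (a + b * of_real q ^ n) / of_real (qint q (Suc n))"
  by (simp add: Eq_nth qpow_def qfact_def prod.nat_ivl_Suc')

lemma Eq_nth_Suc_recurrence:
  assumes "q \<noteq> 1" and "q \<noteq> -1"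
  shows "of_real (1 - q ^ Suc n) * Eq q a b $ Suc n
    = of_real (1 - q) * (a + b * of_real q ^ n) * Eq q a b $ n"
proof -
  have "1 - q ^ Suc n = (1 - q) * qint q (Suc n)"
    using assms(1) by (simp add: qint_def)
  then have "complex_of_real (1 - q ^ Suc n) = of_real (1 - q) * of_real (qint q (Suc n))"
    by (metis of_real_mult)
  with qint_nonzero[OF assms, of "Suc n"] show ?thesis
    by (simp add: Eq_nth_Suc)
qed

lemma Eq_eq_Abs_fps:
  assumes "q \<noteq> 1" and "q \<noteq> -1" and "s 0 = 1"
    and "\<And>n. of_real (1 - q ^ Suc n) * s (Suc n) = of_real (1 - q) * (a + b * of_real q ^ n) * s n"
  shows "Eq q a b = Abs_fps s"
proof -
  have "Eq q a b $ n = s n" for n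
  proof (induction n)
    case (Suc n)
    have "of_real (1 - q ^ Suc n) \<noteq> (0 :: complex)"
      using of_real_power_ne_one[OF assms(1,2), of "Suc n", where 'a=complex] by simp
    with Eq_nth_Suc_recurrence[OF assms(1,2)] assms(4) Suc show ?case
      by (metis mult_left_cancel)
  qed (simp add: assms(3))
  then show ?thesis by (simp add: fps_eq_iff)
qed

lemma Eq_q_difference_eq:
  assumes "q \<noteq> 1" and "q \<noteq> -1"
  shows "q_difference_eq (of_real q) (of_real (1 - q)) a b (Eq q a b)"
  unfolding q_difference_eq_def
proof (rule fps_ext)
  fix n
  show "(Eq q a b - fps_dilate (of_real q) (Eq q a b)) $ n
    = (fps_const (of_real (1 - q)) * fps_X
       * (fps_const a * Eq q a b + fps_const b * fps_dilate (of_real q) (Eq q a b))) $ n"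
  proof (cases n)
    case (Suc m)
    then show ?thesis
      using Eq_nth_Suc_recurrence[OF assms, of m a b] by (simp add: algebra_simps)
  qed simp
qed

lemma Eq_mult_Eq_reflect:
  assumes "q \<noteq> 1" and "q \<noteq> -1"
  shows "Eq q a b * (Eq q b a oo - fps_X) = 1"
proof -
  let ?h = "Eq q a b * (Eq q b a oo - fps_X)"
  have "fps_dilate (of_real q) ?h = ?h"
    using q_difference_eq_mult_fixed Eq_q_difference_eq[OF assms]
      q_difference_eq_compose_uminus_X[OF Eq_q_difference_eq[OF assms]] by blast
  moreover have "complex_of_real q ^ n \<noteq> 1" if "n > 0" for n
    using of_real_power_ne_one[OF assms that] .
  ultimately have "?h = fps_const (?h $ 0)"
    by (rule fps_dilate_fixed_imp_const)
  then show ?thesis by simp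
qed

lemma Eq_inverse_base:
  assumes "q \<noteq> 0" and "q \<noteq> 1" and "q \<noteq> -1"
  shows "Eq (inverse q) a b = Eq q b a"
proof -
  have inv: "inverse q \<noteq> 1" "inverse q \<noteq> -1"
    using assms by (metis inverse_1 inverse_inverse_eq inverse_minus_eq)+
  have "Eq q b a = Abs_fps (fps_nth (Eq (inverse q) a b))"
  proof (rule Eq_eq_Abs_fps[OF assms(2,3)])
    fix n
    have "of_real (1 - inverse q ^ Suc n) * Eq (inverse q) a b $ Suc n
      = of_real (1 - inverse q) * (a + b * of_real (inverse q) ^ n) * Eq (inverse q) a b $ n"
      by (rule Eq_nth_Suc_recurrence[OF inv])
    then show "of_real (1 - q ^ Suc n) * Eq (inverse q) a b $ Suc n
      = of_real (1 - q) * (b + a * of_real q ^ n) * Eq (inverse q) a b $ n"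
      using assms(1) by (simp add: field_simps power_inverse)
  qed simp
  then show ?thesis by (simp add: fps_nth_inverse)
qed

lemma Eq_1_neg_q:
  assumes "q \<noteq> 1" and "q \<noteq> -1"
  shows "Eq q 1 (- of_real q) = inverse (1 - fps_const (of_real (1 - q)) * fps_X)"
proof -
  have E: "Eq q 1 (- of_real q) = Abs_fps (\<lambda>n. of_real (1 - q) ^ n)"
    by (rule Eq_eq_Abs_fps[OF assms]) (simp_all add: algebra_simps)
  have "(1 - fps_const (of_real (1 - q)) * fps_X) * Abs_fps (\<lambda>n. of_real (1 - q) ^ n) = 1"
    by (auto simp: fps_eq_iff algebra_simps gr0_conv_Suc)
  then show ?thesis
    unfolding E by (rule fps_inverse_unique [symmetric])
qed

lemma Eq_neg_q_1:
  assumes "q \<noteq> 1" and "q \<noteq> -1"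
  shows "Eq q (- of_real q) 1 = 1 + fps_const (of_real (1 - q)) * fps_X"
proof -
  have "Eq q (- of_real q) 1 = Abs_fps (fps_nth (1 + fps_const (of_real (1 - q)) * fps_X))"
  proof (rule Eq_eq_Abs_fps[OF assms])
    fix n
    show "of_real (1 - q ^ Suc n) * (1 + fps_const (of_real (1 - q)) * fps_X) $ Suc n
      = of_real (1 - q) * (- of_real q + 1 * of_real q ^ n) * (1 + fps_const (of_real (1 - q)) * fps_X) $ n"
      by (cases n) (simp_all add: algebra_simps)
  qed simp
  then show ?thesis by (simp add: fps_nth_inverse)
qed

theorem mainTheorem15:
  fixes q :: real and a b :: complex
  assumes "q \<noteq> 0" and "q \<noteq> 1" and "q \<noteq> -1"
  shows "Eq q a b * (Eq q b a oo (- fps_X)) = 1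
       \<and> Eq (inverse q) a b = Eq q b a
       \<and> Eq q 1 (- complex_of_real q) = inverse (1 - fps_const (complex_of_real (1 - q)) * fps_X)
       \<and> Eq q (- complex_of_real q) 1 = 1 + fps_const (complex_of_real (1 - q)) * fps_X"
  using Eq_mult_Eq_reflect[OF assms(2,3)] Eq_inverse_base[OF assms]
    Eq_1_neg_q[OF assms(2,3)] Eq_neg_q_1[OF assms(2,3)]
  by blast

end
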